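(* Let $\Gamma$ be a reduct of $(\mathbb{Z};<)$ with finite relational signature. Then for all $a_1,a_2\in\mathbb{Z}$ at least one of the following holds: (i) there are $r\ge0$ and a finite $S\subseteq\mathbb{Z}$ with $\{a_1,a_2\}\subseteq S$ such that every homomorphism $f$ from $\Gamma[S]$ to $\Gamma$ satisfies $|f(a_1)-f(a_2)|\le r$; (ii) there is a homomorphism $h\colon\Gamma\to\mathbb{Q}.\Gamma$ such that $h(a_1)$ and $h(a_2)$ lie in different copies of $\mathbb{Z}$ in $\mathbb{Q}.\mathbb{Z}$.
   Context: A reduct of $(\mathbb{Z};<)$ is a relational structure with domain $\mathbb{Z}$ whose relations are first-order definable in $(\mathbb{Z};<)$; $\Gamma[S]$ is the induced substructure on $S$. $\mathbb{Q}.\mathbb{Z}=\mathbb{Q}\times\mathbb{Z}$ with the lexicographic order; its copies of $\mathbb{Z}$ are the sets $\{a\}\times\mathbb{Z}$. $\mathbb{Q}.\Gamma$ is the structure on $\mathbb{Q}.\mathbb{Z}$ interpreting each relation symbol of $\Gamma$ by the relation defined over $(\mathbb{Q}.\mathbb{Z};<)$ by a first-order formula defining it over $(\mathbb{Z};<)$. *)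

theory Defs
  imports Complex_Main
begin

datatype fo = FLess nat nat | FEq nat nat | FNeg fo | FConj fo fo | FEx nat fo

fun fv :: "fo \<Rightarrow> nat set" where
  "fv (FLess x y) = {x, y}"
| "fv (FEq x y) = {x, y}"
| "fv (FNeg \<phi>) = fv \<phi>"
| "fv (FConj \<phi> \<psi>) = fv \<phi> \<union> fv \<psi>"
| "fv (FEx x \<phi>) = fv \<phi> - {x}"

fun sat :: "('a \<Rightarrow> 'a \<Rightarrow> bool) \<Rightarrow> fo \<Rightarrow> (nat \<Rightarrow> 'a) \<Rightarrow> bool" where
  "sat lt (FLess x y) e = lt (e x) (e y)"
| "sat lt (FEq x y) e = (e x = e y)"
| "sat lt (FNeg \<phi>) e = (\<not> sat lt \<phi> e)"
| "sat lt (FConj \<phi> \<psi>) e = (sat lt \<phi> e \<and> sat lt \<psi> e)"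
| "sat lt (FEx x \<phi>) e = (\<exists>a. sat lt \<phi> (e(x := a)))"

text \<open>Lexicographic order on Q.Z = Q x Z; the copies of Z are the sets {a} x Z.\<close>
definition qz_less :: "rat \<times> int \<Rightarrow> rat \<times> int \<Rightarrow> bool" where
  "qz_less p q = (fst p < fst q \<or> (fst p = fst q \<and> snd p < snd q))"

text \<open>A finite relational signature of a reduct of (Z;<) is given by a list of
  relation symbols, each with an arity n and a first-order formula over (Z;<)
  with free variables among 0..n-1 defining it. The relation of the symbol (n,phi)
  in Gamma is the set of n-tuples t (lists of length n) with sat (<) phi (nth t);
  in Q.Gamma it is interpreted by the same formula over (Q.Z; qz_less).\<close>
definition wf_sig :: "(nat \<times> fo) list \<Rightarrow> bool" where
  "wf_sig sig = (\<forall>(n, \<phi>) \<in> set sig. fv \<phi> \<subseteq> {..<n})"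

definition hom_sub :: "(nat \<times> fo) list \<Rightarrow> int set \<Rightarrow> (int \<Rightarrow> int) \<Rightarrow> bool" where
  "hom_sub sig S f = (\<forall>(n, \<phi>) \<in> set sig. \<forall>t :: int list.
      length t = n \<and> set t \<subseteq> S \<and> sat (<) \<phi> (nth t) \<longrightarrow> sat (<) \<phi> (nth (map f t)))"

definition hom_QZ :: "(nat \<times> fo) list \<Rightarrow> (int \<Rightarrow> rat \<times> int) \<Rightarrow> bool" where
  "hom_QZ sig h = (\<forall>(n, \<phi>) \<in> set sig. \<forall>t :: int list.
      length t = n \<and> sat (<) \<phi> (nth t) \<longrightarrow> sat qz_less \<phi> (nth (map h t)))"

end

theory Submission
  imports Defs "HOL-Library.Product_Lexorder" "HOL-Library.Nat_Bijection"
begin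

text \<open>A first-order formula of quantifier depth \<open>d\<close> cannot distinguish two assignments into
  \<open>\<rat>.\<int>\<close> whose pairwise distances agree after clipping at a threshold depending only on
  \<open>d\<close>, points in different copies of \<open>\<int>\<close> counting as infinitely far apart; this is an
  Ehrenfeucht-Fraisse argument, and it applies to \<open>\<int>\<close> itself as a single copy.

  If (i) fails, there are homomorphisms \<open>F k\<close> from ever larger finite substructures with
  \<open>\<bar>F k a\<^sub>1 - F k a\<^sub>2\<bar> > k\<close>. A diagonal argument yields an infinite set of indices
  along which every difference \<open>F k y - F k x\<close> is constant or tends to \<open>\<plusminus>\<infinity>\<close>; this
  defines a map \<open>h\<close> into \<open>\<rat>.\<int>\<close>, with \<open>x, y\<close> in one copy at the limiting distance, or in
  copies ordered by the sign of the divergence. For every tuple some \<open>F k\<close> realises the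
  clipped distances of its \<open>h\<close>-image, so \<open>h\<close> preserves all relations, and \<open>h a\<^sub>1\<close>,
  \<open>h a\<^sub>2\<close> lie in different copies because their differences are unbounded.\<close>

section \<open>Clipped distances in \<open>\<rat>.\<int>\<close>\<close>

lemma qz_less_eq_less: "qz_less = (<)"
  by (auto simp: fun_eq_iff qz_less_def less_prod_def')

definition clip :: "nat \<Rightarrow> int \<Rightarrow> int" where
  "clip N v = max (-(int N + 1)) (min (int N + 1) v)"

definition qz_gap :: "nat \<Rightarrow> rat \<times> int \<Rightarrow> rat \<times> int \<Rightarrow> int" where
  "qz_gap N p q = (if fst p = fst q then clip N (snd q - snd p)
     else if fst p < fst q then int N + 1 else -(int N + 1))"

lemma qz_gap_Pair: "qz_gap N (c, a) (c, b) = clip N (b - a)"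
  by (simp add: qz_gap_def)

lemma qz_gap_self: "qz_gap N p p = 0"
  by (simp add: qz_gap_def clip_def)

lemma qz_gap_swap: "qz_gap N q p = - qz_gap N p q"
  by (auto simp: qz_gap_def clip_def)

lemma clip_qz_gap: "T \<le> N \<Longrightarrow> clip T (qz_gap N p q) = qz_gap T p q"
  by (auto simp: qz_gap_def clip_def)

lemma qz_gap_pos_iff: "0 < qz_gap N p q \<longleftrightarrow> p < q"
  by (cases p; cases q) (auto simp: qz_gap_def clip_def)

lemma qz_gap_nonneg_iff: "0 \<le> qz_gap N p q \<longleftrightarrow> p \<le> q"
  by (cases p; cases q) (auto simp: qz_gap_def clip_def)

lemma qz_gap_eq_0_iff: "qz_gap N p q = 0 \<longleftrightarrow> p = q"
  by (cases p; cases q) (auto simp: qz_gap_def clip_def)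

lemma qz_gap_shift:
  assumes "fst a = fst p" "snd a = snd p + k" "\<bar>k\<bar> \<le> int T" "2 * T \<le> M"
  shows "qz_gap T q a = clip T (qz_gap M q p + k)"
  using assms by (auto simp: qz_gap_def clip_def)

lemma qz_gap_far:
  "\<not> (fst p = fst a \<and> \<bar>snd a - snd p\<bar> \<le> int T) \<Longrightarrow>
   qz_gap T p a = (if p < a then int T + 1 else -(int T + 1))"
  by (cases p; cases a) (auto simp: qz_gap_def clip_def)

lemma qz_gap_top_antimono: "p \<le> q \<Longrightarrow> qz_gap T q r = int T + 1 \<Longrightarrow> qz_gap T p r = int T + 1"
  by (cases p; cases q; cases r) (auto simp: qz_gap_def clip_def split: if_splits)

lemma qz_gap_top_mono: "q \<le> r \<Longrightarrow> qz_gap T p q = int T + 1 \<Longrightarrow> qz_gap T p r = int T + 1"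
  by (cases p; cases q; cases r) (auto simp: qz_gap_def clip_def split: if_splits)

lemma qz_gap_top_trans:
  "qz_gap T p a = int T + 1 \<Longrightarrow> qz_gap T a q = int T + 1 \<Longrightarrow> 2 * T + 1 \<le> M
   \<Longrightarrow> 2 * int T + 2 \<le> qz_gap M p q"
  by (cases p; cases q; cases a) (auto simp: qz_gap_def clip_def split: if_splits)

lemma qz_gap_top_shift:
  "2 * int T + 2 \<le> qz_gap M p q \<Longrightarrow> 2 * T + 1 \<le> M
   \<Longrightarrow> qz_gap T (fst p, snd p + int T + 1) q = int T + 1"
  by (cases p; cases q) (auto simp: qz_gap_def clip_def split: if_splits)

section \<open>Formulas only see clipped distances\<close>

definition union_of_copies :: "(rat \<times> int) set \<Rightarrow> bool" where
  "union_of_copies D \<longleftrightarrow> D \<noteq> {} \<and> (\<forall>p\<in>D. \<forall>k. (fst p, snd p + k) \<in> D)"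

definition same_gaps :: "nat \<Rightarrow> nat set \<Rightarrow> (nat \<Rightarrow> rat \<times> int) \<Rightarrow> (nat \<Rightarrow> rat \<times> int) \<Rightarrow> bool" where
  "same_gaps N V e e' \<longleftrightarrow> (\<forall>i\<in>V. \<forall>j\<in>V. qz_gap N (e i) (e j) = qz_gap N (e' i) (e' j))"

lemma same_gaps_sym: "same_gaps N V e e' \<Longrightarrow> same_gaps N V e' e"
  unfolding same_gaps_def by auto

lemma same_gaps_mono: "T \<le> N \<Longrightarrow> W \<subseteq> V \<Longrightarrow> same_gaps N V e e' \<Longrightarrow> same_gaps T W e e'"
  unfolding same_gaps_def by (metis clip_qz_gap subsetD)

lemma matching_point_near:
  assumes D: "union_of_copies D" and i: "i \<in> V" "e' i \<in> D"
    and near: "fst (e i) = fst a" "\<bar>snd a - snd (e i)\<bar> \<le> int T"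
    and gaps: "same_gaps (2 * T + 2) V e e'"
  shows "\<exists>b\<in>D. \<forall>j\<in>V. qz_gap T (e j) a = qz_gap T (e' j) b"
proof -
  define k where "k = snd a - snd (e i)"
  define b where "b = (fst (e' i), snd (e' i) + k)"
  have "qz_gap T (e j) a = qz_gap T (e' j) b" if "j \<in> V" for j
  proof -
    have "qz_gap T (e j) a = clip T (qz_gap (2 * T + 2) (e j) (e i) + k)"
      by (rule qz_gap_shift) (use near in \<open>auto simp: k_def\<close>)
    also have "\<dots> = clip T (qz_gap (2 * T + 2) (e' j) (e' i) + k)"
      using gaps i that by (simp add: same_gaps_def)
    also have "\<dots> = qz_gap T (e' j) b"
      by (rule qz_gap_shift[symmetric]) (use near in \<open>auto simp: k_def b_def\<close>)
    finally show ?thesis .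
  qed
  moreover have "b \<in> D" using D i by (simp add: union_of_copies_def b_def)
  ultimately show ?thesis by blast
qed

text \<open>A point far from all old points is matched just above the image of the largest old
  point below it; the doubled threshold leaves room for the old points above it.\<close>

lemma matching_point_above:
  assumes D: "union_of_copies D" and fin: "finite V" and V: "e' ` V \<subseteq> D"
    and far: "\<And>j. j \<in> V \<Longrightarrow> qz_gap T (e j) a = (if e j < a then int T + 1 else -(int T + 1))"
    and below: "\<exists>j\<in>V. e j < a"
    and gaps: "same_gaps (2 * T + 2) V e e'"
  shows "\<exists>b\<in>D. \<forall>j\<in>V. qz_gap T (e j) a = qz_gap T (e' j) b"
proof -
  define L where "L = {j\<in>V. e j < a}"
  have "finite (e ` L)" "e ` L \<noteq> {}" using fin below by (auto simp: L_def)
  then obtain i where i: "i \<in> L" "e i = Max (e ` L)" by (metis (no_types, lifting) Max_in imageE)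
  have iV: "i \<in> V" and "e i < a" using i(1) by (auto simp: L_def)
  then have ia: "qz_gap T (e i) a = int T + 1" using far by simp
  have max: "e j \<le> e i" if "j \<in> L" for j using i that \<open>finite (e ` L)\<close> by simp
  define b where "b = (fst (e' i), snd (e' i) + int T + 1)"
  have "qz_gap T (e j) a = qz_gap T (e' j) b" if j: "j \<in> V" for j
  proof (cases "j \<in> L")
    case True
    then have "0 \<le> qz_gap (2 * T + 2) (e j) (e i)" using max qz_gap_nonneg_iff by blast
    then have "e' j \<le> e' i" using gaps iV j qz_gap_nonneg_iff by (metis same_gaps_def)
    moreover have "qz_gap T (e' i) b = int T + 1" by (simp add: b_def qz_gap_def clip_def)
    ultimately have "qz_gap T (e' j) b = int T + 1" by (rule qz_gap_top_antimono)
    moreover have "e j < a" using True by (simp add: L_def)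
    ultimately show ?thesis using far[OF j] by simp
  next
    case False
    then have ja: "qz_gap T a (e j) = int T + 1"
      using far[OF j] j qz_gap_swap[of T a "e j"] by (simp add: L_def)
    have "2 * int T + 2 \<le> qz_gap (2 * T + 2) (e i) (e j)" using qz_gap_top_trans[OF ia ja] by simp
    then have "2 * int T + 2 \<le> qz_gap (2 * T + 2) (e' i) (e' j)"
      using gaps iV j by (simp add: same_gaps_def)
    then have "qz_gap T b (e' j) = int T + 1" using qz_gap_top_shift by (simp add: b_def)
    then show ?thesis using ja qz_gap_swap[of T "e j" a] qz_gap_swap[of T "e' j" b] by simp
  qed
  moreover have "b \<in> D" using D V iV by (force simp: union_of_copies_def b_def add.assoc)
  ultimately show ?thesis by blast
qed

lemma matching_point_below:
  assumes D: "union_of_copies D" and fin: "finite V" and V: "e' ` V \<subseteq> D"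
    and far: "\<And>j. j \<in> V \<Longrightarrow> qz_gap T (e j) a = -(int T + 1)"
    and gaps: "same_gaps (2 * T + 2) V e e'"
  shows "\<exists>b\<in>D. \<forall>j\<in>V. qz_gap T (e j) a = qz_gap T (e' j) b"
proof (cases "V = {}")
  case True
  then show ?thesis using D by (auto simp: union_of_copies_def)
next
  case False
  then have "Min (e ` V) \<in> e ` V" using fin by simp
  then obtain i where i: "i \<in> V" "e i = Min (e ` V)" by (metis imageE)
  define b where "b = (fst (e' i), snd (e' i) - (int T + 1))"
  have "qz_gap T (e j) a = qz_gap T (e' j) b" if j: "j \<in> V" for j
  proof -
    have "e i \<le> e j" using i j fin by simp
    then have "e' i \<le> e' j" using gaps i j qz_gap_nonneg_iff by (metis same_gaps_def)
    moreover have "qz_gap T b (e' i) = int T + 1" by (simp add: b_def qz_gap_def clip_def)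
    ultimately have "qz_gap T b (e' j) = int T + 1" using qz_gap_top_mono by blast
    then show ?thesis using far[OF j] qz_gap_swap[of T "e' j" b] by simp
  qed
  moreover have "b \<in> D" using D V i unfolding union_of_copies_def b_def diff_conv_add_uminus
    by blast
  ultimately show ?thesis by blast
qed

lemma matching_point:
  assumes D: "union_of_copies D" and fin: "finite V" and V: "e' ` V \<subseteq> D"
    and gaps: "same_gaps (2 * T + 2) V e e'"
  shows "\<exists>b\<in>D. \<forall>j\<in>V. qz_gap T (e j) a = qz_gap T (e' j) b"
proof (cases "\<exists>i\<in>V. fst (e i) = fst a \<and> \<bar>snd a - snd (e i)\<bar> \<le> int T")
  case True
  then show ?thesis using matching_point_near[OF D _ _ _ _ gaps] V by blast
next
  case False
  then have far: "\<And>j. j \<in> V \<Longrightarrow> qz_gap T (e j) a = (if e j < a then int T + 1 else -(int T + 1))"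
    using qz_gap_far by blast
  show ?thesis
  proof (cases "\<exists>j\<in>V. e j < a")
    case True
    then show ?thesis using matching_point_above[OF D fin V far _ gaps] by blast
  next
    case False
    then show ?thesis using far by (intro matching_point_below[OF D fin V _ gaps]) auto
  qed
qed

lemma same_gaps_extend:
  assumes D: "union_of_copies D" and fin: "finite V" and V: "e' ` V \<subseteq> D"
    and gaps: "same_gaps (2 * T + 2) V e e'"
  shows "\<exists>b\<in>D. same_gaps T (insert x V) (e(x := a)) (e'(x := b))"
proof -
  let ?V = "V - {x}"
  have "same_gaps (2 * T + 2) ?V e e'" by (rule same_gaps_mono[OF _ _ gaps]) auto
  moreover have "finite ?V" "e' ` ?V \<subseteq> D" using fin V by auto
  ultimately obtain b where b: "b \<in> D" "\<forall>j\<in>?V. qz_gap T (e j) a = qz_gap T (e' j) b"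
    using matching_point[OF D, of ?V e' T e a] by blast
  have "same_gaps T ?V e e'" by (rule same_gaps_mono[OF _ _ gaps]) auto
  then have "same_gaps T (insert x V) (e(x := a)) (e'(x := b))"
  proof -
    have "qz_gap T a (e j) = qz_gap T b (e' j)" if "j \<in> ?V" for j
      using b(2) that qz_gap_swap[of T a "e j"] qz_gap_swap[of T b "e' j"] by simp
    then show ?thesis using b(2) \<open>same_gaps T ?V e e'\<close>
      unfolding same_gaps_def by (auto simp: qz_gap_self)
  qed
  then show ?thesis using b(1) by blast
qed

fun sat_on :: "(rat \<times> int) set \<Rightarrow> fo \<Rightarrow> (nat \<Rightarrow> rat \<times> int) \<Rightarrow> bool" where
  "sat_on D (FLess x y) e = (e x < e y)"
| "sat_on D (FEq x y) e = (e x = e y)"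
| "sat_on D (FNeg \<phi>) e = (\<not> sat_on D \<phi> e)"
| "sat_on D (FConj \<phi> \<psi>) e = (sat_on D \<phi> e \<and> sat_on D \<psi> e)"
| "sat_on D (FEx x \<phi>) e = (\<exists>a\<in>D. sat_on D \<phi> (e(x := a)))"

lemma sat_qz_less_eq_sat_on_UNIV: "sat qz_less \<phi> e = sat_on UNIV \<phi> e"
  by (induction \<phi> arbitrary: e) (auto simp: qz_less_eq_less)

lemma sat_less_eq_sat_on_copy: "sat (<) \<phi> e = sat_on (range (Pair c)) \<phi> (Pair c \<circ> e)"
proof (induction \<phi> arbitrary: e)
  case (FEx x \<phi>)
  then show ?case by (simp only: sat.simps sat_on.simps fun_upd_comp) blast
qed auto

fun qdepth :: "fo \<Rightarrow> nat" where
  "qdepth (FLess x y) = 0"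
| "qdepth (FEq x y) = 0"
| "qdepth (FNeg \<phi>) = qdepth \<phi>"
| "qdepth (FConj \<phi> \<psi>) = max (qdepth \<phi>) (qdepth \<psi>)"
| "qdepth (FEx x \<phi>) = Suc (qdepth \<phi>)"

fun gap_bound :: "nat \<Rightarrow> nat" where
  "gap_bound 0 = 0"
| "gap_bound (Suc d) = 2 * gap_bound d + 2"

lemma gap_bound_mono: "d \<le> d' \<Longrightarrow> gap_bound d \<le> gap_bound d'"
  by (rule lift_Suc_mono_le[of gap_bound]) auto

lemma union_of_copies_UNIV: "union_of_copies UNIV"
  by (simp add: union_of_copies_def)

lemma union_of_copies_copy: "union_of_copies (range (Pair c))"
  by (auto simp: union_of_copies_def)

lemma sat_on_transfer:
  assumes "union_of_copies D" "union_of_copies D'" "fv \<phi> \<subseteq> V" "finite V"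
    "e ` V \<subseteq> D" "e' ` V \<subseteq> D'" "same_gaps N V e e'" "gap_bound (qdepth \<phi>) \<le> N"
    "sat_on D \<phi> e"
  shows "sat_on D' \<phi> e'"
  using assms
proof (induction \<phi> arbitrary: D D' V e e' N)
  case (FLess x y)
  then show ?case using qz_gap_pos_iff by (metis fv.simps(1) insert_subset same_gaps_def sat_on.simps(1))
next
  case (FEq x y)
  then show ?case using qz_gap_eq_0_iff by (metis fv.simps(2) insert_subset same_gaps_def sat_on.simps(2))
next
  case (FNeg \<phi>)
  \<comment> \<open>the induction hypothesis is used with the two assignments exchanged\<close>
  then show ?case using same_gaps_sym by (metis fv.simps(3) qdepth.simps(3) sat_on.simps(3))
next
  case (FConj \<phi> \<psi>)
  have "gap_bound (qdepth \<phi>) \<le> N" "gap_bound (qdepth \<psi>) \<le> N"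
    using FConj.prems(8) gap_bound_mono[of "qdepth \<phi>" "max (qdepth \<phi>) (qdepth \<psi>)"]
      gap_bound_mono[of "qdepth \<psi>" "max (qdepth \<phi>) (qdepth \<psi>)"] by simp_all
  then show ?case using FConj by auto
next
  case (FEx x \<phi>)
  define T where "T = gap_bound (qdepth \<phi>)"
  obtain a where a: "a \<in> D" "sat_on D \<phi> (e(x := a))" using FEx.prems(9) by auto
  have "same_gaps (2 * T + 2) V e e'"
    by (rule same_gaps_mono[OF _ order_refl FEx.prems(7)]) (use FEx.prems(8) in \<open>simp add: T_def\<close>)
  then obtain b where b: "b \<in> D'" "same_gaps T (insert x V) (e(x := a)) (e'(x := b))"
    using same_gaps_extend[OF FEx.prems(2,4,6)] by blast
  have "fv \<phi> \<subseteq> insert x V" "finite (insert x V)" using FEx.prems(3,4) by auto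
  moreover have "(e(x := a)) ` insert x V \<subseteq> D" "(e'(x := b)) ` insert x V \<subseteq> D'"
    using FEx.prems(5,6) a(1) b(1) by auto
  ultimately have "sat_on D' \<phi> (e'(x := b))"
    using FEx.IH[OF FEx.prems(1,2) _ _ _ _ b(2)[unfolded T_def] order_refl a(2)] by blast
  then show ?case using b(1) by auto
qed

section \<open>Limits of sequences of maps \<open>\<int> \<Rightarrow> \<int>\<close>\<close>

definition tends_up :: "(nat \<Rightarrow> int) \<Rightarrow> nat set \<Rightarrow> bool" where
  "tends_up u I \<longleftrightarrow> (\<forall>B. finite {k\<in>I. u k \<le> B})"

definition tends_down :: "(nat \<Rightarrow> int) \<Rightarrow> nat set \<Rightarrow> bool" where
  "tends_down u I \<longleftrightarrow> tends_up (\<lambda>k. - u k) I"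

lemma tends_up_subset:
  assumes "J \<subseteq> I" "tends_up u I"
  shows "tends_up u J"
  unfolding tends_up_def
proof
  fix B
  have "{k\<in>J. u k \<le> B} \<subseteq> {k\<in>I. u k \<le> B}" using assms(1) by auto
  then show "finite {k\<in>J. u k \<le> B}" using assms(2) finite_subset unfolding tends_up_def by blast
qed

lemma tends_down_subset: "J \<subseteq> I \<Longrightarrow> tends_down u I \<Longrightarrow> tends_down u J"
  unfolding tends_down_def by (rule tends_up_subset)

lemma tends_up_cong: "(\<And>k. k \<in> I \<Longrightarrow> u k = v k) \<Longrightarrow> tends_up u I \<longleftrightarrow> tends_up v I"
  unfolding tends_up_def by (metis (mono_tags, lifting) Collect_cong)

lemma tends_down_cong: "(\<And>k. k \<in> I \<Longrightarrow> u k = v k) \<Longrightarrow> tends_down u I \<longleftrightarrow> tends_down v I"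
  unfolding tends_down_def by (rule tends_up_cong) simp

lemma tends_up_add:
  assumes "tends_up u I" "tends_up v I"
  shows "tends_up (\<lambda>k. u k + v k) I"
  unfolding tends_up_def
proof
  fix B
  have "{k\<in>I. u k + v k \<le> B} \<subseteq> {k\<in>I. v k \<le> 0} \<union> {k\<in>I. u k \<le> B}" by auto
  then show "finite {k\<in>I. u k + v k \<le> B}"
    using assms unfolding tends_up_def by (meson finite_Un finite_subset)
qed

lemma tends_up_add_const: "tends_up u I \<Longrightarrow> tends_up (\<lambda>k. u k + c) I"
proof -
  have "{k\<in>I. u k + c \<le> B} = {k\<in>I. u k \<le> B - c}" for B by auto
  then show "tends_up u I \<Longrightarrow> tends_up (\<lambda>k. u k + c) I" unfolding tends_up_def by simp
qed

lemma tends_up_not_const: "infinite I \<Longrightarrow> tends_up u I \<Longrightarrow> \<not> (\<forall>k\<in>I. u k = d)"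
  unfolding tends_up_def by (metis (mono_tags, lifting) Collect_cong Collect_mem_eq order_refl)

lemma tends_up_not_down: "infinite I \<Longrightarrow> tends_up u I \<Longrightarrow> \<not> tends_down u I"
proof
  assume "infinite I" "tends_up u I" "tends_down u I"
  then have "finite ({k\<in>I. u k \<le> 0} \<union> {k\<in>I. - u k \<le> 0})"
    unfolding tends_down_def tends_up_def by blast
  moreover have "{k\<in>I. u k \<le> 0} \<union> {k\<in>I. - u k \<le> 0} = I" by auto
  ultimately show False using \<open>infinite I\<close> by (metis finite_Un)
qed

text \<open>\<open>limit_rel p q u I\<close>: along \<open>I\<close>, the integer sequence \<open>u\<close> behaves like the displacement
  from \<open>p\<close> to \<open>q\<close> in \<open>\<rat>.\<int>\<close>, infinite displacements being those between different copies.\<close>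

definition limit_rel :: "rat \<times> int \<Rightarrow> rat \<times> int \<Rightarrow> (nat \<Rightarrow> int) \<Rightarrow> nat set \<Rightarrow> bool" where
  "limit_rel p q u I \<longleftrightarrow>
     (if fst p = fst q then \<forall>k\<in>I. u k = snd q - snd p
      else if fst p < fst q then tends_up u I else tends_down u I)"

definition limit_on :: "(nat \<Rightarrow> int \<Rightarrow> int) \<Rightarrow> int set \<Rightarrow> (int \<Rightarrow> rat \<times> int) \<Rightarrow> nat set \<Rightarrow> bool" where
  "limit_on F S h I \<longleftrightarrow> infinite I \<and> (\<forall>x\<in>S. \<forall>y\<in>S. limit_rel (h x) (h y) (\<lambda>k. F k y - F k x) I)"

lemma limit_rel_subset: "J \<subseteq> I \<Longrightarrow> limit_rel p q u I \<Longrightarrow> limit_rel p q u J"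
  unfolding limit_rel_def using tends_up_subset tends_down_subset by (auto split: if_splits)

lemma limit_rel_cong: "(\<And>k. k \<in> I \<Longrightarrow> u k = v k) \<Longrightarrow> limit_rel p q u I \<Longrightarrow> limit_rel p q v I"
  unfolding limit_rel_def using tends_up_cong[of I u v] tends_down_cong[of I u v] by auto

lemma limit_rel_swap: "limit_rel p q u I \<Longrightarrow> limit_rel q p (\<lambda>k. - u k) I"
  unfolding limit_rel_def by (auto simp: tends_down_def split: if_splits)

lemma limit_rel_shift: "limit_rel p q u I \<Longrightarrow> limit_rel q (fst p, snd p + d) (\<lambda>k. d - u k) I"
  unfolding limit_rel_def tends_down_def
  using tends_up_add_const[of u I "- d"] tends_up_add_const[of "\<lambda>k. - u k" I d]
  by (auto split: if_splits)

lemma limit_rel_tends_up: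
  assumes "infinite I" "limit_rel p q u I" "tends_up u I"
  shows "fst p < fst q"
proof -
  have "fst p \<noteq> fst q" using assms tends_up_not_const by (metis limit_rel_def)
  show ?thesis
  proof (rule ccontr)
    assume "\<not> fst p < fst q"
    then have "tends_down u I" using assms(2) \<open>fst p \<noteq> fst q\<close> by (simp add: limit_rel_def)
    then show False using tends_up_not_down assms(1,3) by blast
  qed
qed

lemma limit_on_subset: "S' \<subseteq> S \<Longrightarrow> J \<subseteq> I \<Longrightarrow> infinite J \<Longrightarrow> limit_on F S h I \<Longrightarrow> limit_on F S' h J"
  unfolding limit_on_def using limit_rel_subset by blast

lemma limit_on_cong: "(\<And>x. x \<in> S \<Longrightarrow> h x = h' x) \<Longrightarrow> limit_on F S h I \<Longrightarrow> limit_on F S h' I"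
  unfolding limit_on_def by simp

definition settles :: "(nat \<Rightarrow> int) \<Rightarrow> nat set \<Rightarrow> bool" where
  "settles u J \<longleftrightarrow> (\<exists>d. \<forall>k\<in>J. u k = d) \<or> tends_up u J \<or> tends_down u J"

lemma settles_subset: "J \<subseteq> I \<Longrightarrow> settles u I \<Longrightarrow> settles u J"
  unfolding settles_def using tends_up_subset tends_down_subset by blast

lemma tends_up_of_finite_fibres:
  assumes "\<And>d. finite {k\<in>I. u k = d}"
  shows "tends_up u {k\<in>I. 0 \<le> u k}"
  unfolding tends_up_def
proof
  fix B
  have "{k\<in>{k\<in>I. 0 \<le> u k}. u k \<le> B} \<subseteq> (\<Union>d\<in>{0..B}. {k\<in>I. u k = d})" by auto
  then show "finite {k\<in>{k\<in>I. 0 \<le> u k}. u k \<le> B}"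
    using assms by (meson finite_UN_I finite_atLeastAtMost_int finite_subset)
qed

lemma infinite_settling_subset:
  assumes "infinite I"
  obtains J where "J \<subseteq> I" "infinite J" "settles u J"
proof (cases "\<exists>d. infinite {k\<in>I. u k = d}")
  case True
  then obtain d where "infinite {k\<in>I. u k = d}" by blast
  then show ?thesis by (intro that[of "{k\<in>I. u k = d}"]) (auto simp: settles_def)
next
  case False
  have "{k\<in>I. - u k = d} = {k\<in>I. u k = - d}" for d by auto
  with False have fibres: "finite {k\<in>I. u k = d}" "finite {k\<in>I. - u k = d}" for d by auto
  have "I = {k\<in>I. 0 \<le> u k} \<union> {k\<in>I. 0 \<le> - u k}" by auto
  then consider "infinite {k\<in>I. 0 \<le> u k}" | "infinite {k\<in>I. 0 \<le> - u k}"
    using assms by (metis finite_Un)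
  then show ?thesis
  proof cases
    case 1
    have "tends_up u {k\<in>I. 0 \<le> u k}" using fibres(1) by (rule tends_up_of_finite_fibres)
    then show ?thesis using 1 by (intro that[of "{k\<in>I. 0 \<le> u k}"]) (auto simp: settles_def)
  next
    case 2
    have "tends_up (\<lambda>k. - u k) {k\<in>I. 0 \<le> - u k}" using fibres(2) by (rule tends_up_of_finite_fibres)
    then show ?thesis using 2
      by (intro that[of "{k\<in>I. 0 \<le> - u k}"]) (auto simp: settles_def tends_down_def)
  qed
qed

lemma infinite_settling_subset_finite:
  assumes "finite A" "infinite I"
  obtains J where "J \<subseteq> I" "infinite J" "\<forall>x\<in>A. settles (u x) J"
  using assms
proof (induction A arbitrary: thesis rule: finite_induct)
  case empty
  then show ?case by blast
next
  case (insert x A)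
  then obtain J where J: "J \<subseteq> I" "infinite J" "\<forall>y\<in>A. settles (u y) J" by blast
  obtain J' where J': "J' \<subseteq> J" "infinite J'" "settles (u x) J'"
    using infinite_settling_subset[OF J(2)] by blast
  have "\<forall>y\<in>insert x A. settles (u y) J'" using J(3) J' settles_subset by blast
  then show ?case using J(1) J' by (intro insert.prems(1)) auto
qed

lemma rat_between_finite_sets:
  fixes A B :: "rat set"
  assumes "finite A" "finite B" "\<forall>a\<in>A. \<forall>b\<in>B. a < b"
  obtains q where "\<forall>a\<in>A. a < q" "\<forall>b\<in>B. q < b"
proof -
  define lo where "lo = (if A = {} then (if B = {} then 0 else Min B - 1) else Max A)"
  define hi where "hi = (if B = {} then lo + 1 else Min B)"
  have Min: "Min B \<le> b" if "b \<in> B" for b using assms(2) that by simp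
  have Max: "a \<le> Max A" if "a \<in> A" for a using assms(1) that by simp
  have below: "a \<le> lo" if "a \<in> A" for a using Max that by (auto simp: lo_def)
  have above: "hi \<le> b" if "b \<in> B" for b using Min that by (auto simp: hi_def)
  have "lo < hi"
    using assms Max_in[OF assms(1)] Min_in[OF assms(2)]
    by (auto simp: lo_def hi_def simp del: Min_gr_iff Max_less_iff)
  then have "lo < (lo + hi) / 2" "(lo + hi) / 2 < hi" by (simp_all add: field_simps)
  then show ?thesis using that below above by (meson le_less_trans less_le_trans)
qed

lemma limit_on_insertI:
  assumes lim: "limit_on F S h J" and z: "z \<notin> S"
    and b: "\<forall>x\<in>S. limit_rel (h x) b (\<lambda>k. F k z - F k x) J"
  shows "limit_on F (insert z S) (h(z := b)) J"
proof -
  have "limit_rel ((h(z := b)) x) ((h(z := b)) y) (\<lambda>k. F k y - F k x) J"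
    if "x \<in> insert z S" "y \<in> insert z S" for x y
  proof (cases "x = z"; cases "y = z")
    assume "x = z" "y \<noteq> z"
    then have "limit_rel (h y) b (\<lambda>k. F k z - F k y) J" using b that by auto
    then have "limit_rel b (h y) (\<lambda>k. - (F k z - F k y)) J" by (rule limit_rel_swap)
    then show ?thesis using \<open>x = z\<close> \<open>y \<noteq> z\<close> by (auto elim: limit_rel_cong[rotated])
  qed (use lim z b that in \<open>auto simp: limit_on_def limit_rel_def\<close>)
  then show ?thesis using lim by (simp add: limit_on_def)
qed

lemma limit_point_in_copy:
  assumes lim: "limit_on F S h J" and x0: "x0 \<in> S" and d: "\<forall>k\<in>J. F k z - F k x0 = d"
  shows "\<forall>y\<in>S. limit_rel (h y) (fst (h x0), snd (h x0) + d) (\<lambda>k. F k z - F k y) J"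
proof
  fix y assume "y \<in> S"
  then have "limit_rel (h x0) (h y) (\<lambda>k. F k y - F k x0) J" using lim x0 by (simp add: limit_on_def)
  then have "limit_rel (h y) (fst (h x0), snd (h x0) + d) (\<lambda>k. d - (F k y - F k x0)) J"
    by (rule limit_rel_shift)
  then show "limit_rel (h y) (fst (h x0), snd (h x0) + d) (\<lambda>k. F k z - F k y) J"
    by (rule limit_rel_cong[rotated]) (use d in auto)
qed

text \<open>If every old point drifts away from \<open>z\<close>, then \<open>z\<close> goes to a fresh copy, placed between
  the copies of the points drifting below \<open>z\<close> and those drifting above it.\<close>

lemma limit_point_new_copy:
  assumes lim: "limit_on F S h J" and fin: "finite S"
    and drift: "\<forall>x\<in>S. tends_up (\<lambda>k. F k z - F k x) J \<or> tends_down (\<lambda>k. F k z - F k x) J"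
  obtains b where "\<forall>x\<in>S. limit_rel (h x) b (\<lambda>k. F k z - F k x) J"
proof -
  define L where "L = {x\<in>S. tends_up (\<lambda>k. F k z - F k x) J}"
  define U where "U = S - L"
  have "fst (h x) < fst (h y)" if "x \<in> L" "y \<in> U" for x y
  proof -
    have "tends_up (\<lambda>k. (F k z - F k x) + - (F k z - F k y)) J"
      using that drift by (intro tends_up_add) (auto simp: L_def U_def tends_down_def)
    then have "tends_up (\<lambda>k. F k y - F k x) J" by simp
    moreover have "limit_rel (h x) (h y) (\<lambda>k. F k y - F k x) J"
      using lim that by (auto simp: limit_on_def L_def U_def)
    ultimately show ?thesis using lim limit_rel_tends_up[of J "h x" "h y"] by (simp add: limit_on_def)
  qed
  then obtain q where q: "\<forall>a\<in>fst ` h ` L. a < q" "\<forall>c\<in>fst ` h ` U. q < c"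
    using rat_between_finite_sets[of "fst ` h ` L" "fst ` h ` U"] fin by (auto simp: L_def U_def)
  have "limit_rel (h x) (q, 0) (\<lambda>k. F k z - F k x) J" if "x \<in> S" for x
  proof (cases "x \<in> L")
    case True
    then have "fst (h x) < q" "tends_up (\<lambda>k. F k z - F k x) J" using q(1) by (auto simp: L_def)
    then show ?thesis by (simp add: limit_rel_def)
  next
    case False
    then have "tends_down (\<lambda>k. F k z - F k x) J" "x \<in> U" using drift that by (auto simp: L_def U_def)
    moreover from \<open>x \<in> U\<close> have "q < fst (h x)" using q(2) by auto
    ultimately show ?thesis by (simp add: limit_rel_def)
  qed
  then show ?thesis using that by blast
qed

lemma limit_on_insert:
  assumes lim: "limit_on F S h I" and fin: "finite S" and z: "z \<notin> S"
  obtains b J where "limit_on F (insert z S) (h(z := b)) J"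
proof -
  from lim have "infinite I" by (simp add: limit_on_def)
  then obtain J where J: "J \<subseteq> I" "infinite J" "\<forall>x\<in>S. settles (\<lambda>k. F k z - F k x) J"
    by (rule infinite_settling_subset_finite[OF fin, where u = "\<lambda>x k. F k z - F k x"])
  have limJ: "limit_on F S h J" using limit_on_subset[OF order_refl J(1,2) lim] .
  obtain b where "\<forall>x\<in>S. limit_rel (h x) b (\<lambda>k. F k z - F k x) J"
  proof (cases "\<exists>x0\<in>S. \<exists>d. \<forall>k\<in>J. F k z - F k x0 = d")
    case True
    then obtain x0 d where "x0 \<in> S" "\<forall>k\<in>J. F k z - F k x0 = d" by blast
    from limit_point_in_copy[OF limJ this] show ?thesis by (rule that)
  next
    case False
    then have "\<forall>x\<in>S. tends_up (\<lambda>k. F k z - F k x) J \<or> tends_down (\<lambda>k. F k z - F k x) J"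
      using J(3) unfolding settles_def by blast
    then show ?thesis by (rule limit_point_new_copy[OF limJ fin]) (rule that)
  qed
  from limit_on_insertI[OF limJ z this] show ?thesis by (rule that)
qed

text \<open>The limit is built by a diagonal argument: the integers are enumerated via
  \<open>int_decode\<close> and added one at a time, each time passing to a further infinite subsequence.\<close>

lemma limit_exists:
  fixes F :: "nat \<Rightarrow> int \<Rightarrow> int"
  obtains h where "\<And>S. finite S \<Longrightarrow> \<exists>I. limit_on F S h I"
proof -
  define E where "E n = int_decode ` {..<n}" for n
  have E_Suc: "E (Suc n) = insert (int_decode n) (E n)" for n
    by (simp add: E_def lessThan_Suc)
  have E_fresh: "int_decode n \<notin> E n" for n
    by (auto simp: E_def dest: arg_cong[of _ _ int_encode])
  have "\<exists>g. \<forall>n. limit_on F (E n) (fst (g n)) (snd (g n))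
              \<and> (\<forall>x\<in>E n. fst (g (Suc n)) x = fst (g n) x)"
  proof (rule dependent_nat_choice)
    show "\<exists>p. limit_on F (E 0) (fst p) (snd p)"
      by (rule exI[of _ "(h0, UNIV)"]) (simp add: limit_on_def E_def)
  next
    fix p n assume "limit_on F (E n) (fst p) (snd p)"
    then obtain b J where "limit_on F (insert (int_decode n) (E n)) ((fst p)(int_decode n := b)) J"
      using limit_on_insert[OF _ _ E_fresh] by (metis E_def finite_imageI finite_lessThan)
    then show "\<exists>p'. limit_on F (E (Suc n)) (fst p') (snd p') \<and> (\<forall>x\<in>E n. fst p' x = fst p x)"
      using E_fresh by (intro exI[of _ "((fst p)(int_decode n := b), J)"]) (auto simp: E_Suc)
  qed
  then obtain g where g: "\<And>n. limit_on F (E n) (fst (g n)) (snd (g n))"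
    and g_Suc: "\<And>n x. x \<in> E n \<Longrightarrow> fst (g (Suc n)) x = fst (g n) x" by blast
  define h where "h x = fst (g (Suc (int_encode x))) x" for x
  have stable: "fst (g m) x = fst (g n) x" if "n \<le> m" and x: "x \<in> E n" for m n x
    using \<open>n \<le> m\<close>
  proof (induction m rule: dec_induct)
    case (step m)
    then show ?case using g_Suc[of x m] x by (auto simp: E_def)
  qed simp
  have "fst (g n) x = h x" if x: "x \<in> E n" for n x
  proof -
    obtain j where "j < n" "x = int_decode j" using x by (auto simp: E_def)
    then show ?thesis using stable[of "Suc j" n x] by (simp add: h_def E_Suc)
  qed
  then have lim: "limit_on F (E n) h (snd (g n))" for n using g limit_on_cong by metis
  have "\<exists>I. limit_on F S h I" if S: "finite S" for S
  proof -
    obtain n where "\<forall>j\<in>int_encode ` S. j < n" using S finite_nat_set_iff_bounded by blast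
    then have "S \<subseteq> E n" by (force simp: E_def image_iff)
    then show ?thesis using limit_on_subset[OF _ order_refl _ lim] lim by (meson limit_on_def)
  qed
  then show ?thesis using that by blast
qed

section \<open>The limit is a homomorphism into \<open>\<rat>.\<Gamma>\<close>\<close>

lemma limit_rel_clip:
  assumes "limit_rel p q u I"
  shows "finite {k\<in>I. clip N (u k) \<noteq> qz_gap N p q}"
proof -
  consider "fst p = fst q" | "fst p < fst q" | "fst q < fst p" by fastforce
  then show ?thesis
  proof cases
    case 1
    then have "{k\<in>I. clip N (u k) \<noteq> qz_gap N p q} = {}" using assms by (auto simp: limit_rel_def qz_gap_def)
    then show ?thesis by (metis finite.emptyI)
  next
    case 2
    then have "{k\<in>I. clip N (u k) \<noteq> qz_gap N p q} \<subseteq> {k\<in>I. u k \<le> int N}"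
      by (auto simp: qz_gap_def clip_def)
    moreover have "finite {k\<in>I. u k \<le> int N}" using assms 2 by (simp add: limit_rel_def tends_up_def)
    ultimately show ?thesis by (rule finite_subset)
  next
    case 3
    then have "{k\<in>I. clip N (u k) \<noteq> qz_gap N p q} \<subseteq> {k\<in>I. - u k \<le> int N}"
      by (auto simp: qz_gap_def clip_def)
    moreover have "finite {k\<in>I. - u k \<le> int N}"
      using assms 3 by (simp add: limit_rel_def tends_down_def tends_up_def)
    ultimately show ?thesis by (rule finite_subset)
  qed
qed

lemma limit_on_realises_gaps:
  assumes lim: "limit_on F S h I" and fin: "finite S"
  obtains k where "m \<le> k" "\<forall>x\<in>S. \<forall>y\<in>S. qz_gap N (c, F k x) (c, F k y) = qz_gap N (h x) (h y)"
proof -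
  define bad where "bad = (\<Union>x\<in>S. \<Union>y\<in>S. {k\<in>I. clip N (F k y - F k x) \<noteq> qz_gap N (h x) (h y)})"
  have "finite {k\<in>I. clip N (F k y - F k x) \<noteq> qz_gap N (h x) (h y)}" if "x \<in> S" "y \<in> S" for x y
    by (rule limit_rel_clip) (use lim that in \<open>simp add: limit_on_def\<close>)
  then have "finite bad" using fin by (simp add: bad_def)
  moreover have "infinite I" using lim by (simp add: limit_on_def)
  ultimately have "I - bad - {..<m} \<noteq> {}" by (metis finite.emptyI finite_Diff2 finite_lessThan)
  then obtain k where "k \<in> I - bad - {..<m}" by blast
  then show ?thesis using that[of k] by (auto simp: bad_def qz_gap_Pair)
qed

lemma hom_sub_mono: "S' \<subseteq> S \<Longrightarrow> hom_sub sig S f \<Longrightarrow> hom_sub sig S' f"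
  unfolding hom_sub_def by blast

lemma limit_hom_QZ:
  assumes wf: "wf_sig sig"
    and hom: "\<And>S. finite S \<Longrightarrow> \<forall>\<^sub>F k in sequentially. hom_sub sig S (F k)"
    and lim: "\<And>S. finite S \<Longrightarrow> \<exists>I. limit_on F S h I"
  shows "hom_QZ sig h"
  unfolding hom_QZ_def
proof (intro ballI allI impI, clarify)
  fix \<phi> and t :: "int list"
  assume sig: "(length t, \<phi>) \<in> set sig" and sat: "sat (<) \<phi> ((!) t)"
  define N where "N = gap_bound (qdepth \<phi>)"
  obtain I where I: "limit_on F (set t) h I" using lim by blast
  obtain m where m: "\<And>k. m \<le> k \<Longrightarrow> hom_sub sig (set t) (F k)"
    using hom[of "set t"] by (auto simp: eventually_sequentially)
  obtain k where "m \<le> k" and gaps: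
    "\<forall>x\<in>set t. \<forall>y\<in>set t. qz_gap N (0, F k x) (0, F k y) = qz_gap N (h x) (h y)"
    using limit_on_realises_gaps[OF I finite_set, of m N 0] by blast
  have "sat (<) \<phi> ((!) (map (F k) t))" using m[OF \<open>m \<le> k\<close>] sig sat by (auto simp: hom_sub_def)
  then have sat_copy: "sat_on (range (Pair 0)) \<phi> (Pair 0 \<circ> (!) (map (F k) t))"
    using sat_less_eq_sat_on_copy by blast
  have same: "same_gaps N {..<length t} (Pair 0 \<circ> (!) (map (F k) t)) ((!) (map h t))"
    using gaps by (simp add: same_gaps_def)
  have fv: "fv \<phi> \<subseteq> {..<length t}" using wf sig by (auto simp: wf_sig_def)
  have "sat_on UNIV \<phi> ((!) (map h t))"
    by (rule sat_on_transfer[OF union_of_copies_copy union_of_copies_UNIV fv finite_lessThan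
          _ _ same _ sat_copy]) (auto simp: N_def)
  then show "sat qz_less \<phi> ((!) (map h t))" by (simp add: sat_qz_less_eq_sat_on_UNIV)
qed

lemma limit_separates:
  assumes lim: "limit_on F {a1, a2} h I"
    and unbounded: "\<And>B. \<forall>\<^sub>F k in sequentially. B < \<bar>F k a1 - F k a2\<bar>"
  shows "fst (h a1) \<noteq> fst (h a2)"
proof
  assume "fst (h a1) = fst (h a2)"
  then have "\<forall>k\<in>I. F k a2 - F k a1 = snd (h a2) - snd (h a1)"
    using lim by (simp add: limit_on_def limit_rel_def)
  moreover obtain m where "\<And>k. m \<le> k \<Longrightarrow> \<bar>snd (h a2) - snd (h a1)\<bar> < \<bar>F k a1 - F k a2\<bar>"
    using unbounded by (auto simp: eventually_sequentially)
  moreover have "I - {..<m} \<noteq> {}"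
    using lim by (metis Diff_eq_empty_iff finite_lessThan finite_subset limit_on_def)
  then obtain k where "k \<in> I" "m \<le> k" by (meson Diff_iff ex_in_conv lessThan_iff not_le)
  ultimately show False by (metis abs_minus_commute order_less_irrefl)
qed

lemma finite_subset_atLeastAtMost_eventually:
  fixes S :: "int set"
  assumes "finite S"
  shows "\<forall>\<^sub>F k in sequentially. S \<subseteq> {- int k..int k}"
proof -
  obtain m where m: "\<forall>j\<in>(\<lambda>x. nat \<bar>x\<bar>) ` S. j \<le> m"
    using assms finite_nat_set_iff_bounded_le by blast
  have "S \<subseteq> {- int k..int k}" if "m \<le> k" for k
  proof
    fix x assume "x \<in> S"
    then have "nat \<bar>x\<bar> \<le> k" using m that by fastforce
    then show "x \<in> {- int k..int k}" by auto
  qed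
  then show ?thesis unfolding eventually_sequentially by blast
qed

lemma hom_sub_eventually:
  assumes "\<And>k. hom_sub sig (A \<union> {- int k..int k}) (F k)" and "finite S"
  shows "\<forall>\<^sub>F k in sequentially. hom_sub sig S (F k)"
  using finite_subset_atLeastAtMost_eventually[OF \<open>finite S\<close>]
  by (rule eventually_mono) (blast intro: hom_sub_mono[OF _ assms(1)])

lemma eventually_gt_of_nat_bound:
  fixes g :: "nat \<Rightarrow> int"
  assumes "\<And>k. int k < g k"
  shows "\<forall>\<^sub>F k in sequentially. B < g k"
proof -
  have "B < g k" if "nat B \<le> k" for k using assms[of k] that by linarith
  then show ?thesis unfolding eventually_sequentially by blast
qed

theorem mainTheorem7:
  fixes sig :: "(nat \<times> fo) list" and a1 a2 :: int
  assumes "wf_sig sig"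
  shows "(\<exists>r::int. r \<ge> 0 \<and> (\<exists>S. finite S \<and> {a1, a2} \<subseteq> S \<and>
             (\<forall>f. hom_sub sig S f \<longrightarrow> \<bar>f a1 - f a2\<bar> \<le> r)))
       \<or> (\<exists>h. hom_QZ sig h \<and> fst (h a1) \<noteq> fst (h a2))"
proof (cases "\<forall>k::nat. \<exists>f. hom_sub sig ({a1, a2} \<union> {- int k..int k}) f \<and> int k < \<bar>f a1 - f a2\<bar>")
  case False
  then obtain k where k: "\<forall>f. hom_sub sig ({a1, a2} \<union> {- int k..int k}) f \<longrightarrow> \<bar>f a1 - f a2\<bar> \<le> int k"
    by (auto simp: not_less)
  then have "\<exists>S. finite S \<and> {a1, a2} \<subseteq> S \<and> (\<forall>f. hom_sub sig S f \<longrightarrow> \<bar>f a1 - f a2\<bar> \<le> int k)"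
    by (intro exI[of _ "{a1, a2} \<union> {- int k..int k}"]) simp
  then show ?thesis by (intro disjI1 exI[of _ "int k"]) simp
next
  case True
  then obtain F where F: "\<And>k. hom_sub sig ({a1, a2} \<union> {- int k..int k}) (F k)"
    "\<And>k. int k < \<bar>F k a1 - F k a2\<bar>" by metis
  obtain h where lim: "\<And>S. finite S \<Longrightarrow> \<exists>I. limit_on F S h I" using limit_exists by blast
  obtain I where I: "limit_on F {a1, a2} h I" using lim[of "{a1, a2}"] by blast
  have "hom_QZ sig h" using limit_hom_QZ[OF assms hom_sub_eventually[OF F(1)] lim] .
  moreover have "fst (h a1) \<noteq> fst (h a2)"
    using limit_separates[OF I eventually_gt_of_nat_bound[OF F(2)]] .
  ultimately show ?thesis by blast
qed

end
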